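(* Consider a slotted system with diversity. There are $N$ users, $N_{sub}\ge2$ sub-carriers and slots $1,\dots,T$, where $0<\alpha<1$, $\alpha T\in\mathbb Z$ and $(1-\alpha)T$ is even. The BS uses pmfs $\mathbf p$ on users and $\mathbf q$ on sub-carriers: in every slot, independently, it chooses user $i$ with probability $p_i$ and sub-carrier $j$ with probability $q_j$, and transmits to that user on that sub-carrier. An adversarial blocking matrix is $\sigma\in\{0,1\}^{N_{sub}\times T}$, where $\sigma_j(t)=0$ means sub-carrier $j$ is blocked in slot $t$. It is feasible if $\sum_{j,t}(1-\sigma_j(t))\le\alpha T$ and at most one sub-carrier is blocked per slot. Ages satisfy $a_i(1)=1$, $a_i(t+1)=1$ if user $i$ is chosen in slot $t$ on an unblocked sub-carrier, and $a_i(t+1)=a_i(t)+1$ otherwise. The payoff is $\Delta^{\mathbf p,\mathbf q,\sigma}=\frac1T\sum_{t=1}^T\frac1N\sum_i\mathbb E[a_i(t)]$; the BS minimizes it and the adversary maximizes it. Let $\sigma'$ be the adversarial strategy that, in each slot $t\in\{\frac{(1-\alpha)T}2+1,\dots,\frac{(1+\alpha)T}2\}$, blocks one sub-carrier chosen uniformly at random (independently), and blocks nothing in other slots. Let $\bar{\mathbf p}$ and $\bar{\mathbf q}$ be the uniform pmfs. Then $(\bar{\mathbf p},\bar{\mathbf q},\sigma')$ is a Nash equilibrium. That is: - $(\bar{\mathbf p},\bar{\mathbf q})$ minimizes $\Delta^{\mathbf p,\mathbf q,\sigma'}$ over all pmfs $\mathbf p,\mathbf q$; and - $\sigma'$ attains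 $\max_{\sigma\text{ feasible}}\Delta^{\bar{\mathbf p},\bar{\mathbf q},\sigma}$.
   Context: The expectation under $\sigma'$ includes the adversary's randomness. *)

theory Defs
  imports "HOL-Probability.Probability"
begin

text \<open>Users are indexed by {..<N}, sub-carriers by {..<Nsub}, slots by {1..T}.
  A blocking matrix is sig :: nat => nat => nat with sig j t in {0,1};
  sig j t = 0 means sub-carrier j is blocked in slot t.
  A trajectory of BS choices is a function slot => (user, sub-carrier).\<close>

text \<open>age_aux sig x i n is the age a_i(n+1) of user i, given blocking matrix sig
  and the BS choices x (x t = (user chosen in slot t, sub-carrier chosen in slot t)).\<close>
primrec age_aux :: "(nat \<Rightarrow> nat \<Rightarrow> nat) \<Rightarrow> (nat \<Rightarrow> nat \<times> nat) \<Rightarrow> nat \<Rightarrow> nat \<Rightarrow> nat" where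
  "age_aux sig x i 0 = 1"
| "age_aux sig x i (Suc n) =
     (if fst (x (Suc n)) = i \<and> sig (snd (x (Suc n))) (Suc n) = 1 then 1
      else age_aux sig x i n + 1)"

definition age :: "(nat \<Rightarrow> nat \<Rightarrow> nat) \<Rightarrow> (nat \<Rightarrow> nat \<times> nat) \<Rightarrow> nat \<Rightarrow> nat \<Rightarrow> nat" where
  "age sig x i t = age_aux sig x i (t - 1)"

definition bs_traj :: "nat \<Rightarrow> nat pmf \<Rightarrow> nat pmf \<Rightarrow> (nat \<Rightarrow> nat \<times> nat) pmf" where
  "bs_traj T p q = Pi_pmf {1..T} (0, 0) (\<lambda>_. pair_pmf p q)"

definition payoff :: "nat \<Rightarrow> nat \<Rightarrow> nat pmf \<Rightarrow> nat pmf \<Rightarrow> (nat \<Rightarrow> nat \<Rightarrow> nat) pmf \<Rightarrow> real" where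
  "payoff N T p q S =
     (1 / real T) * (\<Sum>t\<in>{1..T}. (1 / real N) * (\<Sum>i<N.
        measure_pmf.expectation (pair_pmf S (bs_traj T p q))
          (\<lambda>(sig, x). real (age sig x i t))))"

definition payoff_det :: "nat \<Rightarrow> nat \<Rightarrow> nat pmf \<Rightarrow> nat pmf \<Rightarrow> (nat \<Rightarrow> nat \<Rightarrow> nat) \<Rightarrow> real" where
  "payoff_det N T p q sig = payoff N T p q (return_pmf sig)"

definition feasible :: "nat \<Rightarrow> nat \<Rightarrow> real \<Rightarrow> (nat \<Rightarrow> nat \<Rightarrow> nat) \<Rightarrow> bool" where
  "feasible Nsub T \<alpha> sig \<longleftrightarrow>
     (\<forall>j<Nsub. \<forall>t\<in>{1..T}. sig j t \<in> {0, 1}) \<and>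
     real (\<Sum>j<Nsub. \<Sum>t\<in>{1..T}. 1 - sig j t) \<le> \<alpha> * real T \<and>
     (\<forall>t\<in>{1..T}. (\<Sum>j<Nsub. 1 - sig j t) \<le> 1)"

definition window :: "nat \<Rightarrow> real \<Rightarrow> nat set" where
  "window T \<alpha> = {t. (1 - \<alpha>) * real T / 2 + 1 \<le> real t \<and> real t \<le> (1 + \<alpha>) * real T / 2}"

definition sigma' :: "nat \<Rightarrow> nat \<Rightarrow> real \<Rightarrow> (nat \<Rightarrow> nat \<Rightarrow> nat) pmf" where
  "sigma' Nsub T \<alpha> =
     map_pmf (\<lambda>b j t. if t \<in> window T \<alpha> \<and> b t = j then 0 else 1)
       (Pi_pmf (window T \<alpha>) 0 (\<lambda>_. pmf_of_set {..<Nsub}))"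

end

theory Submission
  imports Defs
begin

text \<open>Expected ages have a product form in the per-slot miss probabilities. Under sigma' the
  miss probability of user i is 1 - p i * c s with c independent of q, and the resulting
  expected total age is a convex function of p i (in the variable 1 - p i it is a sum of products of
  nonnegative increasing affine functions), so by Jensen's inequality the uniform p is optimal.

  Against the uniform (p, q), a feasible deterministic adversary blocking the slots B yields miss
  probabilities y on B and x < y elsewhere. Expanding the products around x, the total age is a
  constant, plus y - x times the sum over B of slot weights geom_sum x a * geom_sum x (T - a), which are
  unimodal with maximum in the middle, plus (y - x)^2 times a sum over pairs of blocked slots that is
  dominated by a sum of the same unimodal shape. Both are maximised by the centred window of
  at most alpha T slots, and this centred profile is exactly the one that sigma' induces.\<close>

section \<open>Expansion of the total age around a constant profile\<close>

definition geom_sum :: "'a::comm_semiring_1 \<Rightarrow> nat \<Rightarrow> 'a" where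
  "geom_sum x m = (\<Sum>l<m. x ^ l)"

lemma geom_sum_0 [simp]: "geom_sum x 0 = 0"
  by (simp add: geom_sum_def)

lemma geom_sum_Suc: "geom_sum x (Suc m) = geom_sum x m + x ^ m"
  by (simp add: geom_sum_def)

lemma geom_sum_add: "geom_sum x (m + n) = geom_sum x m + x ^ m * geom_sum x n"
  by (induction n) (simp_all add: geom_sum_def power_add algebra_simps)

lemma geom_sum_nonneg: "(0::'a::linordered_semidom) \<le> x \<Longrightarrow> 0 \<le> geom_sum x m"
  by (simp add: geom_sum_def sum_nonneg)

lemma geom_sum_reversed: "geom_sum x m = (\<Sum>u\<in>{1..m}. x ^ (m - u))"
  unfolding geom_sum_def
  by (rule sum.reindex_bij_witness[where i="\<lambda>u. m - u" and j="\<lambda>l. m - l"]) auto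

lemma geom_sum_shifted: "geom_sum x (T - a) = (\<Sum>t\<in>{Suc a..T}. x ^ (t - Suc a))"
  unfolding geom_sum_def
  by (rule sum.reindex_bij_witness[where i="\<lambda>t. t - Suc a" and j="\<lambda>l. l + Suc a"]) auto

lemma prod_add_expand_left:
  fixes \<delta> :: "nat \<Rightarrow> 'a::comm_semiring_1"
  assumes "u \<le> t"
  shows "(\<Prod>s\<in>{u..<t}. x + \<delta> s) =
     x ^ (t - u) + (\<Sum>a\<in>{u..<t}. x ^ (a - u) * \<delta> a * (\<Prod>s\<in>{Suc a..<t}. x + \<delta> s))"
  using assms
proof (induction "t - u" arbitrary: u)
  case 0
  then show ?case by simp
next
  case (Suc k)
  then have ut: "u < t" by simp
  have split: "{u..<t} = insert u {Suc u..<t}" using ut by auto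
  have shift: "x * (\<Sum>a\<in>{Suc u..<t}. x ^ (a - Suc u) * \<delta> a * (\<Prod>s\<in>{Suc a..<t}. x + \<delta> s))
      = (\<Sum>a\<in>{Suc u..<t}. x ^ (a - u) * \<delta> a * (\<Prod>s\<in>{Suc a..<t}. x + \<delta> s))"
    unfolding sum_distrib_left
  proof (rule sum.cong)
    fix a assume "a \<in> {Suc u..<t}"
    then have "a - u = Suc (a - Suc u)" by auto
    then show "x * (x ^ (a - Suc u) * \<delta> a * (\<Prod>s\<in>{Suc a..<t}. x + \<delta> s))
        = x ^ (a - u) * \<delta> a * (\<Prod>s\<in>{Suc a..<t}. x + \<delta> s)"
      by (simp add: mult.assoc)
  qed simp
  have "x * x ^ (t - Suc u) = x ^ (t - u)"
    using ut by (simp flip: power_Suc add: Suc_diff_Suc)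
  with Suc.hyps(1)[of "Suc u"] Suc.hyps(2) ut shift show ?case
    by (simp add: split distrib_left distrib_right algebra_simps)
qed

lemma prod_add_expand_right:
  fixes \<delta> :: "nat \<Rightarrow> 'a::comm_semiring_1"
  assumes "v \<le> t"
  shows "(\<Prod>s\<in>{v..<t}. x + \<delta> s) =
     x ^ (t - v) + (\<Sum>e\<in>{v..<t}. (\<Prod>s\<in>{v..<e}. x + \<delta> s) * \<delta> e * x ^ (t - Suc e))"
  using assms
proof (induction t)
  case 0
  then show ?case by simp
next
  case (Suc t)
  show ?case
  proof (cases "v = Suc t")
    case False
    with Suc.prems have vt: "v \<le> t" by simp
    have shift: "(\<Sum>e\<in>{v..<t}. (\<Prod>s\<in>{v..<e}. x + \<delta> s) * \<delta> e * x ^ (t - Suc e)) * x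
        = (\<Sum>e\<in>{v..<t}. (\<Prod>s\<in>{v..<e}. x + \<delta> s) * \<delta> e * x ^ (Suc t - Suc e))"
      unfolding sum_distrib_right
    proof (rule sum.cong)
      fix e assume "e \<in> {v..<t}"
      then have "Suc t - Suc e = Suc (t - Suc e)" by auto
      then show "(\<Prod>s\<in>{v..<e}. x + \<delta> s) * \<delta> e * x ^ (t - Suc e) * x
          = (\<Prod>s\<in>{v..<e}. x + \<delta> s) * \<delta> e * x ^ (Suc t - Suc e)"
        by (simp add: mult.assoc mult.commute[of x])
    qed simp
    have "x ^ (t - v) * x = x ^ (Suc t - v)"
      using vt by (simp add: Suc_diff_le mult.commute)
    with Suc.IH[OF vt] vt shift show ?thesis
      by (simp add: prod.atLeastLessThan_Suc sum.atLeastLessThan_Suc algebra_simps)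
  qed simp
qed

lemma sum_triangle_swap_lt:
  fixes g :: "nat \<Rightarrow> nat \<Rightarrow> 'a::comm_monoid_add"
  shows "(\<Sum>t\<in>{m..T}. \<Sum>e\<in>{m..<t}. g e t) = (\<Sum>e\<in>{m..<T}. \<Sum>t\<in>{Suc e..T}. g e t)"
proof -
  have "(\<Sum>t\<in>{m..T}. \<Sum>e\<in>{m..<t}. g e t) = (\<Sum>t\<in>{m..T}. \<Sum>e\<in>{e. e \<in> {m..<T} \<and> e < t}. g e t)"
    by (rule sum.cong) (auto intro!: sum.cong)
  also have "\<dots> = (\<Sum>e\<in>{m..<T}. \<Sum>t\<in>{t. t \<in> {m..T} \<and> e < t}. g e t)"
    by (rule sum.swap_restrict) auto
  also have "\<dots> = (\<Sum>e\<in>{m..<T}. \<Sum>t\<in>{Suc e..T}. g e t)"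
    by (rule sum.cong) (auto intro!: sum.cong)
  finally show ?thesis .
qed

lemma sum_triangle_swap_le:
  fixes g :: "nat \<Rightarrow> nat \<Rightarrow> 'a::comm_monoid_add"
  shows "(\<Sum>u\<in>{m..t}. \<Sum>a\<in>{u..<t}. g u a) = (\<Sum>a\<in>{m..<t}. \<Sum>u\<in>{m..a}. g u a)"
proof -
  have "(\<Sum>u\<in>{m..t}. \<Sum>a\<in>{u..<t}. g u a) = (\<Sum>u\<in>{m..t}. \<Sum>a\<in>{a. a \<in> {m..<t} \<and> u \<le> a}. g u a)"
    by (rule sum.cong) (auto intro!: sum.cong)
  also have "\<dots> = (\<Sum>a\<in>{m..<t}. \<Sum>u\<in>{u. u \<in> {m..t} \<and> u \<le> a}. g u a)"
    by (rule sum.swap_restrict) auto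
  also have "\<dots> = (\<Sum>a\<in>{m..<t}. \<Sum>u\<in>{m..a}. g u a)"
    by (rule sum.cong) (auto intro!: sum.cong)
  finally show ?thesis .
qed

lemma sum_intervals_by_inner_point:
  fixes f :: "nat \<Rightarrow> nat \<Rightarrow> nat \<Rightarrow> 'a::comm_monoid_add"
  shows "(\<Sum>t\<in>{1..T}. \<Sum>u\<in>{1..t}. \<Sum>a\<in>{u..<t}. f u a t) = (\<Sum>a\<in>{1..<T}. \<Sum>u\<in>{1..a}. \<Sum>t\<in>{Suc a..T}. f u a t)"
proof -
  have "(\<Sum>t\<in>{1..T}. \<Sum>u\<in>{1..t}. \<Sum>a\<in>{u..<t}. f u a t) = (\<Sum>t\<in>{1..T}. \<Sum>a\<in>{1..<t}. \<Sum>u\<in>{1..a}. f u a t)"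
    by (rule sum.cong) (simp_all add: sum_triangle_swap_le)
  also have "\<dots> = (\<Sum>a\<in>{1..<T}. \<Sum>t\<in>{Suc a..T}. \<Sum>u\<in>{1..a}. f u a t)"
    by (rule sum_triangle_swap_lt)
  also have "\<dots> = (\<Sum>a\<in>{1..<T}. \<Sum>u\<in>{1..a}. \<Sum>t\<in>{Suc a..T}. f u a t)"
    by (rule sum.cong) (simp_all add: sum.swap[of _ "{Suc _..T}"])
  finally show ?thesis .
qed

lemma prod_add_expand_second_order:
  fixes \<delta> :: "nat \<Rightarrow> 'a::comm_semiring_1"
  assumes "u \<le> t"
  shows "(\<Prod>s\<in>{u..<t}. x + \<delta> s) = x ^ (t - u)
     + (\<Sum>a\<in>{u..<t}. x ^ (a - u) * \<delta> a * x ^ (t - Suc a))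
     + (\<Sum>a\<in>{u..<t}. \<Sum>e\<in>{Suc a..<t}.
          x ^ (a - u) * (\<delta> a * \<delta> e * (\<Prod>s\<in>{Suc a..<e}. x + \<delta> s)) * x ^ (t - Suc e))"
proof -
  have "x ^ (a - u) * \<delta> a * (\<Prod>s\<in>{Suc a..<t}. x + \<delta> s) = x ^ (a - u) * \<delta> a * x ^ (t - Suc a)
      + (\<Sum>e\<in>{Suc a..<t}. x ^ (a - u) * (\<delta> a * \<delta> e * (\<Prod>s\<in>{Suc a..<e}. x + \<delta> s)) * x ^ (t - Suc e))"
    if "a \<in> {u..<t}" for a
    using that prod_add_expand_right[of "Suc a" t x \<delta>]
    by (simp add: distrib_left sum_distrib_left mult_ac)
  then show ?thesis
    using prod_add_expand_left[OF assms, of x \<delta>] by (simp add: sum.distrib add.assoc)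
qed

lemma sum_intervals_geom:
  "(\<Sum>u\<in>{1..a}. \<Sum>t\<in>{Suc e..T}. x ^ (a - u) * c * x ^ (t - Suc e))
     = c * geom_sum x a * geom_sum x (T - e)"
  by (simp add: geom_sum_reversed[of x a] geom_sum_shifted sum_distrib_left sum_distrib_right mult_ac)

text \<open>If a user is not refreshed in slot s with probability z s, independently over the
  slots, its expected age in slot t is the sum over u \<le> t of the products of z over [u, t).\<close>
definition total_age :: "nat \<Rightarrow> (nat \<Rightarrow> real) \<Rightarrow> real" where
  "total_age T z = (\<Sum>t\<in>{1..T}. \<Sum>u\<in>{1..t}. \<Prod>s\<in>{u..<t}. z s)"

lemma total_age_cong: "(\<And>s. s \<in> {1..<T} \<Longrightarrow> z s = z' s) \<Longrightarrow> total_age T z = total_age T z'"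
  unfolding total_age_def by (intro sum.cong prod.cong refl) auto

lemma total_age_expand:
  "total_age T (\<lambda>s. x + \<delta> s) = total_age T (\<lambda>_. x)
    + (\<Sum>a\<in>{1..<T}. \<delta> a * geom_sum x a * geom_sum x (T - a))
    + (\<Sum>a\<in>{1..<T}. \<Sum>e\<in>{Suc a..<T}.
        \<delta> a * \<delta> e * (\<Prod>s\<in>{Suc a..<e}. x + \<delta> s) * geom_sum x a * geom_sum x (T - e))"
proof -
  let ?pair = "\<lambda>a e. \<delta> a * \<delta> e * (\<Prod>s\<in>{Suc a..<e}. x + \<delta> s)"
  have "total_age T (\<lambda>s. x + \<delta> s) = total_age T (\<lambda>_. x)
     + (\<Sum>t\<in>{1..T}. \<Sum>u\<in>{1..t}. \<Sum>a\<in>{u..<t}. x ^ (a - u) * \<delta> a * x ^ (t - Suc a))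
     + (\<Sum>t\<in>{1..T}. \<Sum>u\<in>{1..t}. \<Sum>a\<in>{u..<t}. \<Sum>e\<in>{Suc a..<t}.
          x ^ (a - u) * ?pair a e * x ^ (t - Suc e))"
    unfolding total_age_def sum.distrib[symmetric]
    by (intro sum.cong refl) (simp add: prod_add_expand_second_order)
  also have "(\<Sum>t\<in>{1..T}. \<Sum>u\<in>{1..t}. \<Sum>a\<in>{u..<t}. x ^ (a - u) * \<delta> a * x ^ (t - Suc a))
     = (\<Sum>a\<in>{1..<T}. \<delta> a * geom_sum x a * geom_sum x (T - a))"
    unfolding sum_intervals_by_inner_point sum_intervals_geom ..
  also have "(\<Sum>t\<in>{1..T}. \<Sum>u\<in>{1..t}. \<Sum>a\<in>{u..<t}. \<Sum>e\<in>{Suc a..<t}.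
          x ^ (a - u) * ?pair a e * x ^ (t - Suc e))
     = (\<Sum>a\<in>{1..<T}. \<Sum>u\<in>{1..a}. \<Sum>e\<in>{Suc a..<T}. \<Sum>t\<in>{Suc e..T}.
          x ^ (a - u) * ?pair a e * x ^ (t - Suc e))"
    unfolding sum_intervals_by_inner_point by (intro sum.cong refl sum_triangle_swap_lt)
  also have "\<dots> = (\<Sum>a\<in>{1..<T}. \<Sum>e\<in>{Suc a..<T}. \<Sum>u\<in>{1..a}. \<Sum>t\<in>{Suc e..T}.
          x ^ (a - u) * ?pair a e * x ^ (t - Suc e))"
    by (intro sum.cong refl sum.swap)
  also have "\<dots> = (\<Sum>a\<in>{1..<T}. \<Sum>e\<in>{Suc a..<T}. ?pair a e * geom_sum x a * geom_sum x (T - e))"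
    by (simp only: sum_intervals_geom)
  finally show ?thesis .
qed

section \<open>Two-level profiles: the centred window is optimal\<close>

definition slot_weight :: "real \<Rightarrow> nat \<Rightarrow> nat \<Rightarrow> real" where
  "slot_weight x S a = geom_sum x a * geom_sum x (S - a)"

lemma slot_weight_nonneg: "0 \<le> x \<Longrightarrow> 0 \<le> slot_weight x S a"
  by (simp add: slot_weight_def geom_sum_nonneg)

lemma slot_weight_le_Suc:
  assumes x: "0 \<le> x" and a: "2 * a + 1 \<le> S"
  shows "slot_weight x S a \<le> slot_weight x S (Suc a)"
proof -
  define b where "b = S - Suc a"
  have Sb: "S - a = Suc b" and ab: "a \<le> b" using a by (simp_all add: b_def)
  have "x ^ a * geom_sum x b = x ^ a * geom_sum x (b - a) + x ^ b * geom_sum x a"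
    using geom_sum_add[of x "b - a" a] ab by (simp add: algebra_simps flip: power_add)
  then have "x ^ b * geom_sum x a \<le> x ^ a * geom_sum x b"
    using x geom_sum_nonneg[OF x, of "b - a"] by simp
  then show ?thesis
    unfolding slot_weight_def Sb b_def[symmetric] geom_sum_Suc by (simp add: algebra_simps)
qed

lemma slot_weight_mono_below_center:
  assumes x: "0 \<le> x" and "a \<le> a'" and "2 * a' \<le> S + 1"
  shows "slot_weight x S a \<le> slot_weight x S a'"
  using assms(2,3)
proof (induction a' rule: dec_induct)
  case (step a')
  then show ?case using slot_weight_le_Suc[OF x, of a' S] by simp
qed simp

lemma slot_weight_reflect: "a \<le> S \<Longrightarrow> slot_weight x S (S - a) = slot_weight x S a"
  by (simp add: slot_weight_def mult.commute)

lemma slot_weight_le_central: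
  assumes x: "0 \<le> x" and S: "S = 2 * k + c"
    and q: "q \<notin> {k+1..k+c}" and w: "w \<in> {k+1..k+c}"
  shows "slot_weight x S q \<le> slot_weight x S w"
proof (cases "S \<le> q")
  case True
  then show ?thesis using slot_weight_nonneg[OF x] by (simp add: slot_weight_def)
next
  case False
  define q' where "q' = min q (S - q)"
  define w' where "w' = min w (S - w)"
  have "slot_weight x S q = slot_weight x S q'"
    using False slot_weight_reflect[of q S x] by (simp add: q'_def min_def)
  moreover have "slot_weight x S w = slot_weight x S w'"
    using w S slot_weight_reflect[of w S x] by (simp add: w'_def min_def)
  moreover have "q' \<le> w'" and "2 * w' \<le> S + 1"
    using q w S False by (auto simp: q'_def w'_def)
  ultimately show ?thesis using slot_weight_mono_below_center[OF x] by simp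
qed

lemma sum_le_sum_dominated:
  fixes f :: "'a \<Rightarrow> 'b::ordered_comm_monoid_add"
  assumes "finite A" "finite B" "card A \<le> card B"
    and le: "\<And>a b. a \<in> A \<Longrightarrow> b \<in> B \<Longrightarrow> f a \<le> f b"
    and nonneg: "\<And>b. b \<in> B \<Longrightarrow> 0 \<le> f b"
  shows "sum f A \<le> sum f B"
proof -
  obtain g where g: "g ` A \<subseteq> B" "inj_on g A"
    using card_le_inj[OF assms(1-3)] by blast
  have "sum f A \<le> sum (f \<circ> g) A"
    using g(1) le by (intro sum_mono) auto
  also have "\<dots> = sum f (g ` A)"
    using g(2) by (simp add: sum.reindex)
  also have "\<dots> \<le> sum f B"
    using g(1) assms(2) nonneg by (intro sum_mono2) auto
  finally show ?thesis .
qed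

lemma sum_slot_weight_le_central:
  assumes x: "0 \<le> x" and S: "S = 2 * k + c" and Q: "finite Q" "card Q \<le> c"
  shows "(\<Sum>a\<in>Q. slot_weight x S a) \<le> (\<Sum>a\<in>{k+1..k+c}. slot_weight x S a)"
proof -
  let ?W = "{k+1..k+c}"
  have "card Q = card (Q \<inter> ?W) + card (Q - ?W)"
    using Q(1) by (rule card_Int_Diff)
  moreover have "card ?W = card (?W \<inter> Q) + card (?W - Q)"
    by (rule card_Int_Diff) simp
  ultimately have "card (Q - ?W) \<le> card (?W - Q)"
    using Q(2) by (simp add: Int_commute)
  then have "sum (slot_weight x S) (Q - ?W) \<le> sum (slot_weight x S) (?W - Q)"
    using Q(1) slot_weight_le_central[OF x S] slot_weight_nonneg[OF x]
    by (intro sum_le_sum_dominated) auto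
  moreover have "sum (slot_weight x S) Q = sum (slot_weight x S) (Q \<inter> ?W) + sum (slot_weight x S) (Q - ?W)"
    using Q(1) by (rule sum.Int_Diff)
  moreover have "sum (slot_weight x S) ?W = sum (slot_weight x S) (?W \<inter> Q) + sum (slot_weight x S) (?W - Q)"
    by (rule sum.Int_Diff) simp
  ultimately show ?thesis by (simp add: Int_commute)
qed

definition card_above :: "nat set \<Rightarrow> nat \<Rightarrow> nat" where
  "card_above B a = card {e\<in>B. a < e}"

definition pair_term :: "real \<Rightarrow> real \<Rightarrow> nat \<Rightarrow> nat set \<Rightarrow> real" where
  "pair_term x y T B = (\<Sum>a\<in>B. \<Sum>e\<in>{e\<in>B. a < e}.
      (\<Prod>s\<in>{Suc a..<e}. if s \<in> B then y else x) * geom_sum x a * geom_sum x (T - e))"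

text \<open>The pair (a, e) with m elements of B strictly between them is charged to the index m;
  for an interval B the bound is attained.\<close>
definition pair_bound :: "real \<Rightarrow> real \<Rightarrow> nat \<Rightarrow> nat set \<Rightarrow> real" where
  "pair_bound x y T B =
     (\<Sum>m<T. y ^ m * (\<Sum>a\<in>{a\<in>B. m < card_above B a}. slot_weight x (T - 1 - m) a))"

lemma pair_factor_le:
  fixes x y :: real and B :: "nat set"
  assumes x: "0 \<le> x" "x \<le> y" and "a < e" "e < T"
  defines "m \<equiv> card (B \<inter> {Suc a..<e})"
  shows "(\<Prod>s\<in>{Suc a..<e}. if s \<in> B then y else x) * geom_sum x (T - e)
           \<le> y ^ m * geom_sum x (T - 1 - m - a)"
    and "{Suc a..<e} \<subseteq> B \<Longrightarrow> (\<Prod>s\<in>{Suc a..<e}. if s \<in> B then y else x) * geom_sum x (T - e)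
           = y ^ m * geom_sum x (T - 1 - m - a)"
proof -
  \<comment> \<open>The g gap factors x are absorbed into the geometric tail: x^g * geom_sum x n \<le> geom_sum x (g + n).\<close>
  define g where "g = card ({Suc a..<e} - B)"
  have "m + g = e - Suc a"
    using card_Int_Diff[of "{Suc a..<e}" B] by (simp add: m_def g_def Int_commute)
  then have T: "T - 1 - m - a = g + (T - e)" using assms(3,4) by simp
  have prod: "(\<Prod>s\<in>{Suc a..<e}. if s \<in> B then y else x) = y ^ m * x ^ g"
    by (simp add: prod.If_cases m_def g_def Int_commute Diff_eq)
  have "x ^ g * geom_sum x (T - e) \<le> geom_sum x (g + (T - e))"
    using geom_sum_add[of x g "T - e"] geom_sum_nonneg[OF x(1), of g] by simp
  then show "(\<Prod>s\<in>{Suc a..<e}. if s \<in> B then y else x) * geom_sum x (T - e)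
      \<le> y ^ m * geom_sum x (T - 1 - m - a)"
    unfolding prod T using x by (simp add: mult.assoc mult_left_mono)
  assume "{Suc a..<e} \<subseteq> B"
  then have "g = 0" by (simp add: g_def)
  then show "(\<Prod>s\<in>{Suc a..<e}. if s \<in> B then y else x) * geom_sum x (T - e)
      = y ^ m * geom_sum x (T - 1 - m - a)"
    unfolding prod T by simp
qed

lemma bij_betw_card_between:
  assumes "finite B"
  shows "bij_betw (\<lambda>e. card (B \<inter> {Suc a..<e})) {e\<in>B. a < e} {..<card_above B a}"
proof -
  let ?h = "\<lambda>e. card (B \<inter> {Suc a..<e})"
  let ?E = "{e\<in>B. a < e}"
  have less: "?h e < ?h e'" if "e \<in> ?E" "e' \<in> ?E" "e < e'" for e e'
  proof -
    have "B \<inter> {Suc a..<e} \<subset> B \<inter> {Suc a..<e'}" using that by auto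
    then show ?thesis by (simp add: psubset_card_mono)
  qed
  have inj: "inj_on ?h ?E"
  proof (rule inj_onI)
    fix e e' assume "e \<in> ?E" "e' \<in> ?E" "?h e = ?h e'"
    then show "e = e'" using less[of e e'] less[of e' e] by (cases e e' rule: linorder_cases) auto
  qed
  have "?h ` ?E \<subseteq> {..<card_above B a}"
  proof
    fix v assume "v \<in> ?h ` ?E"
    then obtain e where e: "e \<in> ?E" "v = ?h e" by auto
    then have "B \<inter> {Suc a..<e} \<subseteq> ?E" "e \<in> ?E" "e \<notin> B \<inter> {Suc a..<e}" by auto
    then have "B \<inter> {Suc a..<e} \<subset> ?E" by blast
    then show "v \<in> {..<card_above B a}"
      using e assms by (simp add: card_above_def psubset_card_mono)
  qed
  moreover have "card (?h ` ?E) = card {..<card_above B a}"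
    using card_image[OF inj] by (simp add: card_above_def)
  ultimately have "?h ` ?E = {..<card_above B a}"
    by (intro card_subset_eq) auto
  then show ?thesis using inj by (simp add: bij_betw_def)
qed

lemma pair_bound_reindex:
  assumes B: "B \<subseteq> {1..<T}"
  shows "(\<Sum>a\<in>B. \<Sum>e\<in>{e\<in>B. a < e}.
           y ^ card (B \<inter> {Suc a..<e}) * slot_weight x (T - 1 - card (B \<inter> {Suc a..<e})) a)
       = pair_bound x y T B"
proof -
  have fin: "finite B" using B finite_subset by blast
  let ?F = "\<lambda>a m. y ^ m * slot_weight x (T - 1 - m) a"
  have inner: "(\<Sum>e\<in>{e\<in>B. a < e}. ?F a (card (B \<inter> {Suc a..<e}))) = (\<Sum>m<card_above B a. ?F a m)" for a
    using sum.reindex_bij_betw[OF bij_betw_card_between[OF fin, of a], of "?F a"] by simp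
  have "(\<Sum>a\<in>B. \<Sum>e\<in>{e\<in>B. a < e}. ?F a (card (B \<inter> {Suc a..<e})))
      = (\<Sum>a\<in>B. \<Sum>m\<in>{m\<in>{..<T}. m < card_above B a}. ?F a m)"
  proof (rule sum.cong[OF refl])
    fix a assume "a \<in> B"
    then have "card_above B a < card B"
      unfolding card_above_def using fin by (intro psubset_card_mono) auto
    also have "card B \<le> T" using card_mono[OF _ B] by simp
    finally have "{m\<in>{..<T}. m < card_above B a} = {..<card_above B a}" by auto
    then show "(\<Sum>e\<in>{e\<in>B. a < e}. ?F a (card (B \<inter> {Suc a..<e})))
        = (\<Sum>m\<in>{m\<in>{..<T}. m < card_above B a}. ?F a m)"
      unfolding inner by simp
  qed
  also have "\<dots> = (\<Sum>m<T. \<Sum>a\<in>{a\<in>B. m < card_above B a}. ?F a m)"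
    by (rule sum.swap_restrict) (use fin in auto)
  finally show ?thesis by (simp add: pair_bound_def sum_distrib_left)
qed

lemma pair_term_le_pair_bound:
  assumes x: "0 \<le> x" "x \<le> y" and B: "B \<subseteq> {1..<T}"
  shows "pair_term x y T B \<le> pair_bound x y T B"
proof -
  have "pair_term x y T B \<le> (\<Sum>a\<in>B. \<Sum>e\<in>{e\<in>B. a < e}.
           y ^ card (B \<inter> {Suc a..<e}) * slot_weight x (T - 1 - card (B \<inter> {Suc a..<e})) a)"
    unfolding pair_term_def slot_weight_def
  proof (intro sum_mono)
    fix a e assume "a \<in> B" "e \<in> {e\<in>B. a < e}"
    with B have "a < e" "e < T" by auto
    from mult_right_mono[OF pair_factor_le(1)[OF x this] geom_sum_nonneg[OF x(1)]]
    show "(\<Prod>s\<in>{Suc a..<e}. if s \<in> B then y else x) * geom_sum x a * geom_sum x (T - e)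
        \<le> y ^ card (B \<inter> {Suc a..<e}) * (geom_sum x a * geom_sum x (T - 1 - card (B \<inter> {Suc a..<e}) - a))"
      by (simp only: ac_simps)
  qed
  then show ?thesis by (simp only: pair_bound_reindex[OF B])
qed

lemma pair_term_interval_eq_pair_bound:
  assumes x: "0 \<le> x" "x \<le> y" and W: "{k+1..k+K} \<subseteq> {1..<T}"
  shows "pair_term x y T {k+1..k+K} = pair_bound x y T {k+1..k+K}"
proof -
  let ?W = "{k+1..k+K}"
  have "pair_term x y T ?W = (\<Sum>a\<in>?W. \<Sum>e\<in>{e\<in>?W. a < e}.
           y ^ card (?W \<inter> {Suc a..<e}) * slot_weight x (T - 1 - card (?W \<inter> {Suc a..<e})) a)"
    unfolding pair_term_def slot_weight_def
  proof (intro sum.cong refl)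
    fix a e assume a: "a \<in> ?W" and e: "e \<in> {e\<in>?W. a < e}"
    then have "k + K < T" using subsetD[OF W, of "k + K"] by simp
    with a e have "a < e" "e < T" "{Suc a..<e} \<subseteq> ?W" by auto
    from pair_factor_le(2)[OF x this]
    show "(\<Prod>s\<in>{Suc a..<e}. if s \<in> ?W then y else x) * geom_sum x a * geom_sum x (T - e)
        = y ^ card (?W \<inter> {Suc a..<e}) * (geom_sum x a * geom_sum x (T - 1 - card (?W \<inter> {Suc a..<e}) - a))"
      by (simp only: ac_simps)
  qed
  then show ?thesis by (simp only: pair_bound_reindex[OF W])
qed

lemma card_above_gt_le:
  assumes "finite B" and "{a\<in>B. m < card_above B a} \<noteq> {}"
  shows "card {a\<in>B. m < card_above B a} + Suc m \<le> card B"
proof -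
  let ?Q = "{a\<in>B. m < card_above B a}"
  define a0 where "a0 = Max ?Q"
  have finQ: "finite ?Q" using assms(1) by simp
  have a0: "a0 \<in> ?Q" unfolding a0_def using finQ assms(2) by (rule Max_in)
  have "a \<le> a0" if "a \<in> ?Q" for a unfolding a0_def using finQ that by simp
  with a0 have "?Q \<inter> {e\<in>B. a0 < e} = {}" by fastforce
  then have "card ?Q + card {e\<in>B. a0 < e} \<le> card B"
    using assms(1) by (subst card_Un_disjoint[symmetric]) (auto intro: card_mono)
  then show ?thesis using a0 by (simp add: card_above_def)
qed

lemma card_above_interval: "a \<in> {l..r} \<Longrightarrow> card_above {l..r} a = r - a"
  unfolding card_above_def by (subgoal_tac "{e\<in>{l..r}. a < e} = {Suc a..r}") auto

lemma pair_bound_le_central: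
  assumes x: "0 \<le> x" "x \<le> y" and T: "T = 2 * k + K" and "finite B" and "card B \<le> K"
  shows "pair_bound x y T B \<le> pair_bound x y T {k+1..k+K}"
  unfolding pair_bound_def
proof (intro sum_mono mult_left_mono)
  fix m assume "m \<in> {..<T}"
  show "0 \<le> y ^ m" using x by simp
  let ?Q = "{a\<in>B. m < card_above B a}"
  let ?W = "{k+1..k+K}"
  show "(\<Sum>a\<in>?Q. slot_weight x (T - 1 - m) a) \<le> (\<Sum>a\<in>{a\<in>?W. m < card_above ?W a}. slot_weight x (T - 1 - m) a)"
  proof (cases "?Q = {}")
    case True
    have "0 \<le> (\<Sum>a\<in>{a\<in>?W. m < card_above ?W a}. slot_weight x (T - 1 - m) a)"
      using slot_weight_nonneg[OF x(1)] by (simp add: sum_nonneg)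
    then show ?thesis unfolding True by simp
  next
    case False
    have c: "card ?Q + Suc m \<le> card B" by (rule card_above_gt_le[OF assms(4) False])
    have S: "T - 1 - m = 2 * k + (K - 1 - m)" using c assms(5) T by simp
    have "{a\<in>?W. m < card_above ?W a} = {k+1..k+(K - 1 - m)}"
      using c assms(5) by (auto simp: card_above_interval)
    moreover have "(\<Sum>a\<in>?Q. slot_weight x (T - 1 - m) a) \<le> (\<Sum>a\<in>{k+1..k+(K - 1 - m)}. slot_weight x (T - 1 - m) a)"
      by (rule sum_slot_weight_le_central[OF x(1) S]) (use c assms(4,5) in auto)
    ultimately show ?thesis by simp
  qed
qed

lemma total_age_two_level:
  assumes B: "B \<subseteq> {1..<T}"
  shows "total_age T (\<lambda>s. if s \<in> B then y else x) = total_age T (\<lambda>_. x)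
     + (y - x) * (\<Sum>a\<in>B. slot_weight x T a) + (y - x)\<^sup>2 * pair_term x y T B"
proof -
  define \<delta> where "\<delta> s = (if s \<in> B then y - x else 0)" for s
  have z: "(\<lambda>s. if s \<in> B then y else x) = (\<lambda>s. x + \<delta> s)" by (auto simp: \<delta>_def)
  have B': "{1..<T} \<inter> B = B" "\<And>a. {Suc a..<T} \<inter> B = {e\<in>B. a < e}" using B by auto
  have "(\<Sum>a\<in>{1..<T}. \<delta> a * geom_sum x a * geom_sum x (T - a))
      = (\<Sum>a\<in>{1..<T}. if a \<in> B then (y - x) * slot_weight x T a else 0)"
    by (intro sum.cong refl) (simp add: \<delta>_def slot_weight_def)
  also have "\<dots> = (y - x) * (\<Sum>a\<in>B. slot_weight x T a)"
    by (simp only: sum.inter_restrict[OF finite_atLeastLessThan, symmetric] B'(1) sum_distrib_left)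
  finally have single: "(\<Sum>a\<in>{1..<T}. \<delta> a * geom_sum x a * geom_sum x (T - a))
      = (y - x) * (\<Sum>a\<in>B. slot_weight x T a)" .
  have pairs: "(\<Sum>a\<in>{1..<T}. \<Sum>e\<in>{Suc a..<T}.
      \<delta> a * \<delta> e * (\<Prod>s\<in>{Suc a..<e}. x + \<delta> s) * geom_sum x a * geom_sum x (T - e))
     = (y - x)\<^sup>2 * pair_term x y T B"
  proof -
    let ?g = "\<lambda>a e. (\<Prod>s\<in>{Suc a..<e}. if s \<in> B then y else x) * geom_sum x a * geom_sum x (T - e)"
    have "(\<Sum>a\<in>{1..<T}. \<Sum>e\<in>{Suc a..<T}.
        \<delta> a * \<delta> e * (\<Prod>s\<in>{Suc a..<e}. x + \<delta> s) * geom_sum x a * geom_sum x (T - e))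
      = (\<Sum>a\<in>{1..<T}. if a \<in> B then (\<Sum>e\<in>{Suc a..<T}. if e \<in> B then (y - x)\<^sup>2 * ?g a e else 0) else 0)"
      unfolding z[symmetric]
      by (intro sum.cong refl) (auto simp: \<delta>_def power2_eq_square mult_ac intro!: sum.cong)
    also have "\<dots> = (\<Sum>a\<in>B. \<Sum>e\<in>{e\<in>B. a < e}. (y - x)\<^sup>2 * ?g a e)"
      by (simp only: sum.inter_restrict[OF finite_atLeastLessThan, symmetric] B')
    finally show ?thesis by (simp add: pair_term_def sum_distrib_left)
  qed
  show ?thesis unfolding z total_age_expand single pairs ..
qed

theorem total_age_two_level_le_central:
  assumes x: "0 \<le> x" "x \<le> y" and T: "T = 2 * k + K" and "1 \<le> k"
    and B: "B \<subseteq> {1..<T}" and "card B \<le> K"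
  shows "total_age T (\<lambda>s. if s \<in> B then y else x) \<le> total_age T (\<lambda>s. if s \<in> {k+1..k+K} then y else x)"
proof -
  let ?W = "{k+1..k+K}"
  have W: "?W \<subseteq> {1..<T}" using T \<open>1 \<le> k\<close> by auto
  have fin: "finite B" using B finite_subset by blast
  have "(\<Sum>a\<in>B. slot_weight x T a) \<le> (\<Sum>a\<in>?W. slot_weight x T a)"
    using sum_slot_weight_le_central[OF x(1) T fin] assms(6) .
  moreover have "pair_term x y T B \<le> pair_term x y T ?W"
    using pair_term_le_pair_bound[OF x B] pair_bound_le_central[OF x T fin assms(6)]
      pair_term_interval_eq_pair_bound[OF x W] by simp
  ultimately show ?thesis
    unfolding total_age_two_level[OF B] total_age_two_level[OF W]
    using x by (simp add: add_mono mult_left_mono)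
qed

section \<open>Convexity in the scheduling probability\<close>

lemma convex_on_sum_fun:
  assumes "finite A" "convex S" "\<And>a. a \<in> A \<Longrightarrow> convex_on S (f a)"
  shows "convex_on S (\<lambda>x. \<Sum>a\<in>A. f a x)"
  using assms by (induction A rule: finite_induct) (auto simp: convex_on_const)

lemma convex_on_prod_mono_nonneg:
  fixes f :: "'a \<Rightarrow> real \<Rightarrow> real"
  assumes "finite A" "convex S"
    and "\<And>a. a \<in> A \<Longrightarrow> convex_on S (f a)" "\<And>a. a \<in> A \<Longrightarrow> mono_on S (f a)"
    and "\<And>a x. a \<in> A \<Longrightarrow> x \<in> S \<Longrightarrow> 0 \<le> f a x"
  shows "convex_on S (\<lambda>x. \<Prod>a\<in>A. f a x) \<and> mono_on S (\<lambda>x. \<Prod>a\<in>A. f a x)"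
  using assms
proof (induction A rule: finite_induct)
  case empty
  then show ?case by (simp add: convex_on_const mono_on_const)
next
  case (insert a A)
  then have IH: "convex_on S (\<lambda>x. \<Prod>a\<in>A. f a x)" "mono_on S (\<lambda>x. \<Prod>a\<in>A. f a x)"
    and fa: "convex_on S (f a)" "mono_on S (f a)" "\<And>x. x \<in> S \<Longrightarrow> 0 \<le> f a x"
    and prod_nonneg: "\<And>x. x \<in> S \<Longrightarrow> 0 \<le> (\<Prod>a\<in>A. f a x)"
    by (simp_all add: prod_nonneg)
  have "convex_on S (\<lambda>x. f a x * (\<Prod>a\<in>A. f a x))"
    using fa IH prod_nonneg by (intro convex_on_mul) auto
  moreover have "mono_on S (\<lambda>x. f a x * (\<Prod>a\<in>A. f a x))"
    using fa IH prod_nonneg by (intro mono_onI mult_mono) (auto dest: mono_onD)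
  ultimately show ?case using insert.hyps by simp
qed

text \<open>Stated in the variable 1 - p i, in which the factors are increasing, as required by
  the library lemma convex_on_mul.\<close>
lemma convex_total_age_reflected:
  assumes "\<And>s. 0 \<le> c s" "\<And>s. c s \<le> 1"
  shows "convex_on {0..1} (\<lambda>x. total_age T (\<lambda>s. 1 - (1 - x) * c s))"
proof -
  have "convex_on {0..1} (\<lambda>x. 1 - (1 - x) * c s)" for s
  proof -
    have "convex_on {0..1} (\<lambda>x. (1 - c s) + c s * x)"
      using assms(1) by (intro convex_on_add convex_on_cmul) (simp_all add: convex_on_const convex_on_ident)
    then show ?thesis by (simp add: algebra_simps)
  qed
  moreover have "mono_on {0..1} (\<lambda>x. 1 - (1 - x) * c s)" for s
    using assms(1) by (intro mono_onI) (simp add: mult_right_mono)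
  moreover have "0 \<le> 1 - (1 - x) * c s" if "x \<in> {0..1}" for x s
    using that assms[of s] mult_le_one[of "1 - x" "c s"] by simp
  ultimately show ?thesis
    unfolding total_age_def
    by (intro convex_on_sum_fun conjunct1[OF convex_on_prod_mono_nonneg]) auto
qed

lemma total_age_jensen:
  assumes c: "\<And>s. 0 \<le> c s" "\<And>s. c s \<le> 1" and N: "1 \<le> N" and p: "set_pmf p \<subseteq> {..<N}"
  shows "total_age T (\<lambda>s. 1 - 1 / real N * c s)
           \<le> 1 / real N * (\<Sum>i<N. total_age T (\<lambda>s. 1 - pmf p i * c s))"
proof -
  let ?\<phi> = "\<lambda>x. total_age T (\<lambda>s. 1 - (1 - x) * c s)"
  have "(\<Sum>i<N. pmf p i) = 1" using p by (intro sum_pmf_eq_1) auto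
  then have mean: "(\<Sum>i<N. (1 / real N) *\<^sub>R (1 - pmf p i)) = 1 - 1 / real N"
    using N by (simp add: sum_subtractf field_simps flip: sum_divide_distrib)
  have "?\<phi> (\<Sum>i<N. (1 / real N) *\<^sub>R (1 - pmf p i)) \<le> (\<Sum>i<N. 1 / real N * ?\<phi> (1 - pmf p i))"
    using N by (intro convex_on_sum[OF _ _ convex_total_age_reflected[OF c]]) (auto simp: pmf_le_1 lessThan_empty_iff)
  then show ?thesis
    unfolding mean by (simp add: sum_distrib_left)
qed

section \<open>Expected ages\<close>

definition not_refreshed :: "(nat \<Rightarrow> nat \<Rightarrow> nat) \<Rightarrow> nat \<Rightarrow> nat \<Rightarrow> nat \<times> nat \<Rightarrow> real" where
  "not_refreshed sig i s v = (if fst v = i \<and> sig (snd v) s = 1 then 0 else 1)"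

lemma age_aux_eq_sum_prod:
  "real (age_aux sig x i n) = (\<Sum>u\<in>{1..Suc n}. \<Prod>s\<in>{u..n}. not_refreshed sig i s (x s))"
proof (induction n)
  case (Suc n)
  have "{1..Suc (Suc n)} = insert (Suc (Suc n)) {1..Suc n}" by auto
  moreover have "(\<Sum>u\<in>{1..Suc n}. \<Prod>s\<in>{u..Suc n}. not_refreshed sig i s (x s))
      = not_refreshed sig i (Suc n) (x (Suc n)) * real (age_aux sig x i n)"
    unfolding Suc.IH sum_distrib_left by (intro sum.cong refl) (auto simp: mult.commute)
  ultimately show ?case by (simp add: not_refreshed_def)
qed simp

lemma age_eq_sum_prod:
  assumes "1 \<le> t"
  shows "real (age sig x i t) = (\<Sum>u\<in>{1..t}. \<Prod>s\<in>{u..<t}. not_refreshed sig i s (x s))"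
proof -
  have "{u..<t} = {u..t - 1}" for u using assms by auto
  then show ?thesis unfolding age_def age_aux_eq_sum_prod using assms by simp
qed

lemma expectation_Pi_pmf_prod:
  fixes h :: "'a \<Rightarrow> 'b \<Rightarrow> real"
  assumes "finite W" "finite A" "\<And>s. finite (set_pmf (U s))" "\<And>s v. 0 \<le> h s v"
  shows "measure_pmf.expectation (Pi_pmf W d U) (\<lambda>b. \<Prod>s\<in>A. h s (b s))
       = (\<Prod>s\<in>A. if s \<in> W then measure_pmf.expectation (U s) (h s) else h s d)"
proof -
  let ?U = "\<lambda>s. if s \<in> W then U s else return_pmf d"
  have "Pi_pmf W d U = Pi_pmf W d ?U"
    by (intro Pi_pmf_cong) auto
  also have "\<dots> = Pi_pmf (W \<union> A) d ?U"
    using assms(1,2) by (intro Pi_pmf_subset'[symmetric]) auto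
  finally have "measure_pmf.expectation (Pi_pmf W d U) (\<lambda>b. \<Prod>s\<in>A. h s (b s))
      = measure_pmf.expectation (Pi_pmf (W \<union> A) d ?U) (\<lambda>b. \<Prod>s\<in>A. h s (if s \<in> A then b s else d))"
    by simp
  also have "\<dots> = measure_pmf.expectation (Pi_pmf A d ?U) (\<lambda>b. \<Prod>s\<in>A. h s (b s))"
    using assms(1,2) by (simp add: Pi_pmf_subset[of "W \<union> A" A])
  also have "\<dots> = (\<Prod>s\<in>A. measure_pmf.expectation (?U s) (h s))"
    using assms by (intro expectation_prod_Pi_pmf) (auto intro: integrable_measure_pmf_finite)
  also have "\<dots> = (\<Prod>s\<in>A. if s \<in> W then measure_pmf.expectation (U s) (h s) else h s d)"
    by (intro prod.cong) auto
  finally show ?thesis .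
qed

lemma expectation_pair_pmf_finite:
  fixes h :: "'a \<times> 'b \<Rightarrow> real"
  assumes A: "finite (set_pmf A)" and B: "finite (set_pmf B)"
  shows "measure_pmf.expectation (pair_pmf A B) h =
         measure_pmf.expectation A (\<lambda>a. measure_pmf.expectation B (\<lambda>b. h (a, b)))"
proof -
  have "measure_pmf.expectation (pair_pmf A B) h
      = (\<Sum>z\<in>set_pmf A \<times> set_pmf B. h z * pmf (pair_pmf A B) z)"
    using A B by (intro integral_measure_pmf_real) auto
  also have "\<dots> = (\<Sum>a\<in>set_pmf A. \<Sum>b\<in>set_pmf B. h (a, b) * (pmf A a * pmf B b))"
    by (subst sum.cartesian_product) (auto simp: pmf_pair intro!: sum.cong)
  also have "\<dots> = (\<Sum>a\<in>set_pmf A. (\<Sum>b\<in>set_pmf B. h (a, b) * pmf B b) * pmf A a)"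
    by (simp add: sum_distrib_left sum_distrib_right mult_ac)
  also have "\<dots> = measure_pmf.expectation A (\<lambda>a. measure_pmf.expectation B (\<lambda>b. h (a, b)))"
    using A B by (simp add: integral_measure_pmf_real[of "set_pmf _"])
  finally show ?thesis .
qed

definition unblocked_prob :: "nat \<Rightarrow> nat pmf \<Rightarrow> (nat \<Rightarrow> nat \<Rightarrow> nat) \<Rightarrow> nat \<Rightarrow> real" where
  "unblocked_prob Nsub q sig s = (\<Sum>j<Nsub. if sig j s = 1 then pmf q j else 0)"

lemma expectation_not_refreshed:
  assumes p: "set_pmf p \<subseteq> {..<N}" and q: "set_pmf q \<subseteq> {..<Nsub}"
  shows "measure_pmf.expectation (pair_pmf p q) (not_refreshed sig i s)
       = 1 - pmf p i * unblocked_prob Nsub q sig s"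
proof -
  let ?Q = "unblocked_prob Nsub q sig s"
  have fin: "finite (set_pmf p)" "finite (set_pmf q)"
    using p q finite_subset by blast+
  have "measure_pmf.expectation q (\<lambda>j. not_refreshed sig i s (a, j)) = 1 - (if a = i then ?Q else 0)" for a
  proof -
    have "measure_pmf.expectation q (\<lambda>j. not_refreshed sig i s (a, j))
        = (\<Sum>j<Nsub. pmf q j - (if a = i then (if sig j s = 1 then pmf q j else 0) else 0))"
      using q by (subst integral_measure_pmf_real[of "{..<Nsub}"]) (auto simp: not_refreshed_def intro!: sum.cong)
    also have "\<dots> = 1 - (if a = i then ?Q else 0)"
      using q by (simp add: sum_subtractf unblocked_prob_def sum_pmf_eq_1)
    finally show ?thesis .
  qed
  then have "measure_pmf.expectation (pair_pmf p q) (not_refreshed sig i s)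
      = measure_pmf.expectation p (\<lambda>a. 1 - (if a = i then ?Q else 0))"
    by (simp add: expectation_pair_pmf_finite[OF fin])
  also have "\<dots> = (\<Sum>a<N. pmf p a - (if a = i then ?Q * pmf p a else 0))"
    using p by (subst integral_measure_pmf_real[of "{..<N}"]) (auto simp: left_diff_distrib intro!: sum.cong)
  also have "\<dots> = 1 - ?Q * pmf p i"
  proof (cases "i < N")
    case False
    then have "pmf p i = 0" using p by (auto simp: pmf_eq_0_set_pmf)
    with False show ?thesis using p by (simp add: sum_subtractf sum_pmf_eq_1)
  qed (use p in \<open>simp add: sum_subtractf sum_pmf_eq_1\<close>)
  finally show ?thesis by (simp add: mult.commute)
qed

lemma finite_set_bs_traj:
  "finite (set_pmf p) \<Longrightarrow> finite (set_pmf q) \<Longrightarrow> finite (set_pmf (bs_traj T p q))"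
  unfolding bs_traj_def by (auto simp: set_Pi_pmf intro!: finite_PiE_dflt)

lemma expectation_age:
  assumes p: "set_pmf p \<subseteq> {..<N}" and q: "set_pmf q \<subseteq> {..<Nsub}" and t: "t \<in> {1..T}"
  shows "measure_pmf.expectation (bs_traj T p q) (\<lambda>x. real (age sig x i t))
       = (\<Sum>u\<in>{1..t}. \<Prod>s\<in>{u..<t}. 1 - pmf p i * unblocked_prob Nsub q sig s)"
proof -
  have fin: "finite (set_pmf p)" "finite (set_pmf q)"
    using p q finite_subset by blast+
  have "measure_pmf.expectation (bs_traj T p q) (\<lambda>x. real (age sig x i t))
      = (\<Sum>u\<in>{1..t}. measure_pmf.expectation (bs_traj T p q) (\<lambda>x. \<Prod>s\<in>{u..<t}. not_refreshed sig i s (x s)))"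
    using t finite_set_bs_traj[OF fin]
    by (simp add: age_eq_sum_prod integrable_measure_pmf_finite)
  also have "\<dots> = (\<Sum>u\<in>{1..t}. \<Prod>s\<in>{u..<t}. measure_pmf.expectation (pair_pmf p q) (not_refreshed sig i s))"
    unfolding bs_traj_def using t fin
    by (subst expectation_Pi_pmf_prod) (auto simp: not_refreshed_def intro!: sum.cong prod.cong)
  finally show ?thesis by (simp add: expectation_not_refreshed[OF p q])
qed

lemma payoff_eq_total_age:
  assumes S: "finite (set_pmf S)" and p: "set_pmf p \<subseteq> {..<N}" and q: "set_pmf q \<subseteq> {..<Nsub}"
  shows "payoff N T p q S = 1 / real T * (1 / real N * (\<Sum>i<N.
           measure_pmf.expectation S (\<lambda>sig. total_age T (\<lambda>s. 1 - pmf p i * unblocked_prob Nsub q sig s))))"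
proof -
  have fin: "finite (set_pmf (bs_traj T p q))"
    using p q finite_subset by (blast intro: finite_set_bs_traj)
  have "payoff N T p q S = 1 / real T * (\<Sum>t\<in>{1..T}. 1 / real N * (\<Sum>i<N.
      measure_pmf.expectation S (\<lambda>sig. \<Sum>u\<in>{1..t}. \<Prod>s\<in>{u..<t}. 1 - pmf p i * unblocked_prob Nsub q sig s)))"
    unfolding payoff_def
    by (intro arg_cong[where f="(*) _"] sum.cong[OF refl])
      (simp add: expectation_pair_pmf_finite[OF S fin] expectation_age[OF p q])
  also have "\<dots> = 1 / real T * (1 / real N * (\<Sum>i<N.
      measure_pmf.expectation S (\<lambda>sig. total_age T (\<lambda>s. 1 - pmf p i * unblocked_prob Nsub q sig s))))"
    unfolding total_age_def using S
    by (simp add: integrable_measure_pmf_finite sum_distrib_left) (rule sum.swap)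
  finally show ?thesis .
qed

section \<open>The strategy sigma'\<close>

lemma finite_window: "\<alpha> < 1 \<Longrightarrow> finite (window T \<alpha>)"
proof (rule finite_subset)
  assume "\<alpha> < 1"
  then have "(1 + \<alpha>) * real T / 2 \<le> real T"
    using mult_right_mono[of \<alpha> 1 "real T"] by (simp add: field_simps)
  then show "window T \<alpha> \<subseteq> {..T}"
    unfolding window_def by auto
qed simp

lemma window_eq_interval:
  assumes k: "(1 - \<alpha>) * real T = 2 * real k" and "0 < \<alpha>"
  shows "window T \<alpha> = {k+1..k+(T - 2 * k)}" and "2 * k \<le> T" and "real (T - 2 * k) = \<alpha> * real T"
proof -
  have "(1 - \<alpha>) * real T \<le> real T" using mult_right_mono[of "1 - \<alpha>" 1 "real T"] assms(2) by simp
  then show kT: "2 * k \<le> T" using k by linarith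
  then show "real (T - 2 * k) = \<alpha> * real T" using k by (simp add: of_nat_diff algebra_simps)
  have "(1 + \<alpha>) * real T / 2 = real T - real k" and "(1 - \<alpha>) * real T / 2 + 1 = real k + 1"
    using k by (auto simp: field_simps)
  then show "window T \<alpha> = {k+1..k+(T - 2 * k)}"
    using kT unfolding window_def by auto
qed

definition sigma'_unblocked_prob :: "nat \<Rightarrow> nat \<Rightarrow> real \<Rightarrow> nat \<Rightarrow> real" where
  "sigma'_unblocked_prob Nsub T \<alpha> s = (if s \<in> window T \<alpha> then 1 - 1 / real Nsub else 1)"

lemma unblocked_prob_single_block:
  assumes "set_pmf q \<subseteq> {..<Nsub}"
  shows "unblocked_prob Nsub q (\<lambda>j t. if t \<in> W \<and> b t = j then 0 else 1) s
       = (if s \<in> W then 1 - pmf q (b s) else 1)"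
proof -
  have one: "(\<Sum>j<Nsub. pmf q j) = 1" using assms by (intro sum_pmf_eq_1) auto
  show ?thesis
  proof (cases "s \<in> W")
    case True
    have "unblocked_prob Nsub q (\<lambda>j t. if t \<in> W \<and> b t = j then 0 else 1) s
        = (\<Sum>j<Nsub. pmf q j - (if b s = j then pmf q j else 0))"
      unfolding unblocked_prob_def using True by (intro sum.cong) auto
    also have "\<dots> = 1 - pmf q (b s)"
      using assms one by (auto simp: sum_subtractf pmf_eq_0_set_pmf)
    finally show ?thesis using True by simp
  qed (simp add: unblocked_prob_def one)
qed

lemma set_pmf_of_set_lessThan: "1 \<le> (n::nat) \<Longrightarrow> set_pmf (pmf_of_set {..<n}) = {..<n}"
  by (intro set_pmf_of_set) (auto simp: lessThan_empty_iff)

lemma finite_set_sigma': "1 \<le> Nsub \<Longrightarrow> \<alpha> < 1 \<Longrightarrow> finite (set_pmf (sigma' Nsub T \<alpha>))"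
  unfolding sigma'_def
  by (auto simp: set_Pi_pmf set_pmf_of_set_lessThan finite_window intro!: finite_imageI)

lemma expectation_total_age_sigma':
  assumes Nsub: "1 \<le> Nsub" and \<alpha>: "\<alpha> < 1" and q: "set_pmf q \<subseteq> {..<Nsub}"
    and \<pi>: "0 \<le> \<pi>" "\<pi> \<le> 1"
  shows "measure_pmf.expectation (sigma' Nsub T \<alpha>) (\<lambda>sig. total_age T (\<lambda>s. 1 - \<pi> * unblocked_prob Nsub q sig s))
       = total_age T (\<lambda>s. 1 - \<pi> * sigma'_unblocked_prob Nsub T \<alpha> s)"
proof -
  let ?W = "window T \<alpha>" and ?U = "pmf_of_set {..<Nsub}"
  define h where "h s v = 1 - \<pi> * (if s \<in> ?W then 1 - pmf q v else 1)" for s v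
  have fin: "finite ?W" "finite (set_pmf ?U)" "finite (set_pmf (Pi_pmf ?W 0 (\<lambda>_. ?U)))"
    using finite_window[OF \<alpha>] Nsub
    by (auto simp: set_Pi_pmf set_pmf_of_set_lessThan)
  have h_nonneg: "0 \<le> h s v" for s v
    using \<pi> pmf_le_1[of q v] mult_le_one[of \<pi> "1 - pmf q v"] by (simp add: h_def)
  have h_mean: "(if s \<in> ?W then measure_pmf.expectation ?U (h s) else h s 0)
      = 1 - \<pi> * sigma'_unblocked_prob Nsub T \<alpha> s" for s
  proof (cases "s \<in> ?W")
    case True
    have "(\<Sum>v<Nsub. pmf q v) = 1" using q by (intro sum_pmf_eq_1) auto
    moreover have "(\<Sum>v<Nsub. h s v) = (\<Sum>v<Nsub. (1 - \<pi>) + \<pi> * pmf q v)"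
      using True by (intro sum.cong refl) (simp add: h_def algebra_simps)
    ultimately have "(\<Sum>v<Nsub. h s v) = real Nsub * (1 - \<pi>) + \<pi>"
      by (simp add: sum.distrib flip: sum_distrib_left)
    then show ?thesis
      using True Nsub by (simp add: integral_pmf_of_set lessThan_empty_iff sigma'_unblocked_prob_def field_simps)
  qed (simp add: h_def sigma'_unblocked_prob_def)
  have "measure_pmf.expectation (sigma' Nsub T \<alpha>) (\<lambda>sig. total_age T (\<lambda>s. 1 - \<pi> * unblocked_prob Nsub q sig s))
      = measure_pmf.expectation (Pi_pmf ?W 0 (\<lambda>_. ?U))
          (\<lambda>b. \<Sum>t\<in>{1..T}. \<Sum>u\<in>{1..t}. \<Prod>s\<in>{u..<t}. h s (b s))"
    unfolding sigma'_def total_age_def by (simp add: unblocked_prob_single_block[OF q] h_def)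
  also have "\<dots> = (\<Sum>t\<in>{1..T}. \<Sum>u\<in>{1..t}. \<Prod>s\<in>{u..<t}.
      if s \<in> ?W then measure_pmf.expectation ?U (h s) else h s 0)"
    using fin by (simp add: integrable_measure_pmf_finite expectation_Pi_pmf_prod h_nonneg)
  finally show ?thesis unfolding h_mean total_age_def .
qed

lemma sigma'_unblocked_prob_bounds:
  "1 \<le> Nsub \<Longrightarrow> 0 \<le> sigma'_unblocked_prob Nsub T \<alpha> s \<and> sigma'_unblocked_prob Nsub T \<alpha> s \<le> 1"
  by (simp add: sigma'_unblocked_prob_def)

lemma payoff_sigma':
  assumes "1 \<le> Nsub" "\<alpha> < 1" "set_pmf p \<subseteq> {..<N}" "set_pmf q \<subseteq> {..<Nsub}"
  shows "payoff N T p q (sigma' Nsub T \<alpha>) = 1 / real T * (1 / real N *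
           (\<Sum>i<N. total_age T (\<lambda>s. 1 - pmf p i * sigma'_unblocked_prob Nsub T \<alpha> s)))"
  using assms
  by (simp add: payoff_eq_total_age finite_set_sigma' expectation_total_age_sigma' pmf_le_1)

lemma payoff_uniform_users:
  assumes "1 \<le> N" "finite (set_pmf S)" "set_pmf q \<subseteq> {..<Nsub}"
  shows "payoff N T (pmf_of_set {..<N}) q S = 1 / real T *
           measure_pmf.expectation S (\<lambda>sig. total_age T (\<lambda>s. 1 - 1 / real N * unblocked_prob Nsub q sig s))"
  using assms by (simp add: payoff_eq_total_age set_pmf_of_set_lessThan lessThan_empty_iff)

lemma payoff_uniform_sigma':
  assumes N: "1 \<le> N" and Nsub: "1 \<le> Nsub" and \<alpha>: "\<alpha> < 1"
  shows "payoff N T (pmf_of_set {..<N}) (pmf_of_set {..<Nsub}) (sigma' Nsub T \<alpha>)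
       = 1 / real T * total_age T (\<lambda>s. 1 - 1 / real N * sigma'_unblocked_prob Nsub T \<alpha> s)"
proof -
  have U: "set_pmf (pmf_of_set {..<Nsub}) \<subseteq> {..<Nsub}"
    by (simp add: set_pmf_of_set_lessThan[OF Nsub])
  have "payoff N T (pmf_of_set {..<N}) (pmf_of_set {..<Nsub}) (sigma' Nsub T \<alpha>)
      = 1 / real T * measure_pmf.expectation (sigma' Nsub T \<alpha>)
          (\<lambda>sig. total_age T (\<lambda>s. 1 - 1 / real N * unblocked_prob Nsub (pmf_of_set {..<Nsub}) sig s))"
    by (rule payoff_uniform_users[OF N finite_set_sigma'[OF Nsub \<alpha>] U])
  also have "measure_pmf.expectation (sigma' Nsub T \<alpha>)
          (\<lambda>sig. total_age T (\<lambda>s. 1 - 1 / real N * unblocked_prob Nsub (pmf_of_set {..<Nsub}) sig s))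
      = total_age T (\<lambda>s. 1 - 1 / real N * sigma'_unblocked_prob Nsub T \<alpha> s)"
    by (rule expectation_total_age_sigma'[OF Nsub \<alpha> U]) (use N in simp_all)
  finally show ?thesis .
qed

lemma uniform_minimizes_payoff_sigma':
  assumes N: "1 \<le> N" and Nsub: "1 \<le> Nsub" and \<alpha>: "\<alpha> < 1"
    and p: "set_pmf p \<subseteq> {..<N}" and q: "set_pmf q \<subseteq> {..<Nsub}"
  shows "payoff N T (pmf_of_set {..<N}) (pmf_of_set {..<Nsub}) (sigma' Nsub T \<alpha>) \<le> payoff N T p q (sigma' Nsub T \<alpha>)"
proof -
  let ?c = "sigma'_unblocked_prob Nsub T \<alpha>"
  have c: "0 \<le> ?c s" "?c s \<le> 1" for s using sigma'_unblocked_prob_bounds[OF Nsub] by auto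
  have "payoff N T (pmf_of_set {..<N}) (pmf_of_set {..<Nsub}) (sigma' Nsub T \<alpha>)
      = 1 / real T * total_age T (\<lambda>s. 1 - 1 / real N * ?c s)"
    by (rule payoff_uniform_sigma'[OF N Nsub \<alpha>])
  also have "\<dots> \<le> 1 / real T * (1 / real N * (\<Sum>i<N. total_age T (\<lambda>s. 1 - pmf p i * ?c s)))"
    by (intro mult_left_mono total_age_jensen[OF c N p]) simp
  also have "\<dots> = payoff N T p q (sigma' Nsub T \<alpha>)"
    by (simp add: payoff_sigma'[OF Nsub \<alpha> p q])
  finally show ?thesis .
qed

lemma sigma'_feasible:
  assumes Nsub: "1 \<le> Nsub" and \<alpha>: "0 < \<alpha>" "\<alpha> < 1" and k: "(1 - \<alpha>) * real T = 2 * real k"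
    and "sig \<in> set_pmf (sigma' Nsub T \<alpha>)"
  shows "feasible Nsub T \<alpha> sig"
proof -
  let ?W = "window T \<alpha>"
  obtain b where b: "\<And>t. t \<in> ?W \<Longrightarrow> b t < Nsub"
    and sig: "sig = (\<lambda>j t. if t \<in> ?W \<and> b t = j then 0 else 1)"
    using assms(5) finite_window[OF \<alpha>(2)] Nsub
    by (auto simp: sigma'_def set_Pi_pmf set_pmf_of_set_lessThan PiE_dflt_def)
  have blocked: "(\<Sum>j<Nsub. 1 - sig j t) = (if t \<in> ?W then 1 else 0)" for t
  proof (cases "t \<in> ?W")
    case True
    then have "(\<Sum>j<Nsub. 1 - sig j t) = (\<Sum>j<Nsub. if b t = j then 1 else 0)"
      by (intro sum.cong) (auto simp: sig)
    then show ?thesis using True b by simp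
  qed (simp add: sig)
  have W: "?W \<subseteq> {1..T}" and card_W: "real (card ?W) = \<alpha> * real T"
    using window_eq_interval[OF k \<alpha>(1)] by auto
  have "(\<Sum>j<Nsub. \<Sum>t\<in>{1..T}. 1 - sig j t) = (\<Sum>t\<in>{1..T}. \<Sum>j<Nsub. 1 - sig j t)"
    by (rule sum.swap)
  also have "\<dots> = (\<Sum>t\<in>{1..T}. if t \<in> ?W then 1 else 0)"
    by (simp only: blocked)
  also have "\<dots> = card ({1..T} \<inter> ?W)"
    by (simp flip: sum.inter_restrict)
  also have "{1..T} \<inter> ?W = ?W"
    using W by blast
  finally have "(\<Sum>j<Nsub. \<Sum>t\<in>{1..T}. 1 - sig j t) = card ?W" .
  then show ?thesis
    unfolding feasible_def using blocked card_W by (simp add: sig)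
qed

lemma unblocked_prob_uniform:
  assumes "1 \<le> Nsub" "\<And>j. j < Nsub \<Longrightarrow> sig j s \<in> {0, 1}"
  shows "unblocked_prob Nsub (pmf_of_set {..<Nsub}) sig s = 1 - real (\<Sum>j<Nsub. 1 - sig j s) / real Nsub"
proof -
  have "unblocked_prob Nsub (pmf_of_set {..<Nsub}) sig s = (\<Sum>j<Nsub. (1 - real (1 - sig j s)) / real Nsub)"
    unfolding unblocked_prob_def
  proof (intro sum.cong refl)
    fix j assume j: "j \<in> {..<Nsub}"
    with assms(2) have "sig j s = 0 \<or> sig j s = 1" by auto
    with assms(1) j show "(if sig j s = 1 then pmf (pmf_of_set {..<Nsub}) j else 0)
        = (1 - real (1 - sig j s)) / real Nsub"
      by (auto simp: lessThan_empty_iff)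
  qed
  also have "\<dots> = 1 - real (\<Sum>j<Nsub. 1 - sig j s) / real Nsub"
    using assms(1) by (simp add: sum_subtractf field_simps flip: sum_divide_distrib)
  finally show ?thesis .
qed

text \<open>Blocking in the last slot T does not affect the ages in the slots 1, ..., T.\<close>
definition blocked_slots :: "nat \<Rightarrow> nat \<Rightarrow> (nat \<Rightarrow> nat \<Rightarrow> nat) \<Rightarrow> nat set" where
  "blocked_slots Nsub T sig = {s\<in>{1..<T}. (\<Sum>j<Nsub. 1 - sig j s) = 1}"

lemma card_blocked_slots_le:
  assumes "feasible Nsub T \<alpha> sig"
  shows "real (card (blocked_slots Nsub T sig)) \<le> \<alpha> * real T"
proof -
  have "card (blocked_slots Nsub T sig) = (\<Sum>s\<in>blocked_slots Nsub T sig. \<Sum>j<Nsub. 1 - sig j s)"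
    by (simp add: blocked_slots_def)
  also have "\<dots> \<le> (\<Sum>s\<in>{1..T}. \<Sum>j<Nsub. 1 - sig j s)"
    by (rule sum_mono2) (auto simp: blocked_slots_def)
  also have "\<dots> = (\<Sum>j<Nsub. \<Sum>t\<in>{1..T}. 1 - sig j t)"
    by (rule sum.swap)
  finally have "real (card (blocked_slots Nsub T sig)) \<le> real (\<Sum>j<Nsub. \<Sum>t\<in>{1..T}. 1 - sig j t)"
    by (simp only: of_nat_le_iff)
  then show ?thesis using assms unfolding feasible_def by linarith
qed

lemma payoff_det_uniform:
  assumes N: "1 \<le> N" and Nsub: "1 \<le> Nsub" and feas: "feasible Nsub T \<alpha> sig"
  shows "payoff_det N T (pmf_of_set {..<N}) (pmf_of_set {..<Nsub}) sig
       = 1 / real T * total_age T (\<lambda>s. if s \<in> blocked_slots Nsub T sig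
           then 1 - (1 - 1 / real Nsub) / real N else 1 - 1 / real N)"
proof -
  let ?U = "pmf_of_set {..<Nsub}"
  have U: "set_pmf ?U \<subseteq> {..<Nsub}"
    by (simp add: set_pmf_of_set_lessThan[OF Nsub])
  have "1 - 1 / real N * unblocked_prob Nsub ?U sig s = (if s \<in> blocked_slots Nsub T sig
      then 1 - (1 - 1 / real Nsub) / real N else 1 - 1 / real N)"
    if s: "s \<in> {1..<T}" for s
  proof -
    define D where "D = (\<Sum>j<Nsub. 1 - sig j s)"
    have "D \<le> 1"
      using feas s by (simp add: feasible_def D_def)
    then have D01: "D = 0 \<or> D = 1" by linarith
    have "unblocked_prob Nsub ?U sig s = 1 - real D / real Nsub"
      unfolding D_def by (rule unblocked_prob_uniform[OF Nsub]) (use feas s in \<open>auto simp: feasible_def\<close>)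
    moreover have "s \<in> blocked_slots Nsub T sig \<longleftrightarrow> D = 1"
      using s by (simp add: blocked_slots_def D_def)
    ultimately show ?thesis using D01 by auto
  qed
  then have "total_age T (\<lambda>s. 1 - 1 / real N * unblocked_prob Nsub ?U sig s)
      = total_age T (\<lambda>s. if s \<in> blocked_slots Nsub T sig
           then 1 - (1 - 1 / real Nsub) / real N else 1 - 1 / real N)"
    by (rule total_age_cong)
  then show ?thesis
    unfolding payoff_det_def by (simp add: payoff_uniform_users[OF N _ U])
qed

lemma payoff_det_le_payoff_sigma':
  assumes N: "1 \<le> N" and Nsub: "1 \<le> Nsub" and \<alpha>: "0 < \<alpha>" "\<alpha> < 1"
    and k: "(1 - \<alpha>) * real T = 2 * real k" and feas: "feasible Nsub T \<alpha> sig"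
  shows "payoff_det N T (pmf_of_set {..<N}) (pmf_of_set {..<Nsub}) sig
           \<le> payoff N T (pmf_of_set {..<N}) (pmf_of_set {..<Nsub}) (sigma' Nsub T \<alpha>)"
proof (cases "T = 0")
  case True
  then show ?thesis by (simp add: payoff_det_def payoff_def)
next
  case False
  define K where "K = T - 2 * k"
  define x where "x = 1 - 1 / real N"
  define y where "y = 1 - (1 - 1 / real Nsub) / real N"
  have W: "window T \<alpha> = {k+1..k+K}" and T: "T = 2 * k + K" and K: "real K = \<alpha> * real T"
    using window_eq_interval[OF k \<alpha>(1)] by (auto simp: K_def)
  have "0 < (1 - \<alpha>) * real T" using False \<alpha>(2) by simp
  then have "1 \<le> k" using k by simp
  have xy: "0 \<le> x" "x \<le> y" using N Nsub by (simp_all add: x_def y_def field_simps)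
  have "card (blocked_slots Nsub T sig) \<le> K"
    using card_blocked_slots_le[OF feas] K by simp
  then have "total_age T (\<lambda>s. if s \<in> blocked_slots Nsub T sig then y else x)
      \<le> total_age T (\<lambda>s. if s \<in> {k+1..k+K} then y else x)"
    by (intro total_age_two_level_le_central[OF xy T \<open>1 \<le> k\<close>]) (auto simp: blocked_slots_def)
  moreover have "(\<lambda>s. 1 - 1 / real N * sigma'_unblocked_prob Nsub T \<alpha> s)
      = (\<lambda>s. if s \<in> {k+1..k+K} then y else x)"
    by (auto simp: sigma'_unblocked_prob_def W x_def y_def)
  ultimately show ?thesis
    unfolding payoff_det_uniform[OF N Nsub feas] payoff_uniform_sigma'[OF N Nsub \<alpha>(2)]
      x_def[symmetric] y_def[symmetric]
    by (intro mult_left_mono) simp_all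
qed

theorem theorem13:
  fixes N Nsub T :: nat and \<alpha> :: real
  assumes "N \<ge> 1" and "Nsub \<ge> 2"
    and "0 < \<alpha>" and "\<alpha> < 1"
    and "\<alpha> * real T \<in> \<int>"
    and "\<exists>k::nat. (1 - \<alpha>) * real T = 2 * real k"
  shows "(\<forall>p q. set_pmf p \<subseteq> {..<N} \<longrightarrow> set_pmf q \<subseteq> {..<Nsub} \<longrightarrow>
            payoff N T (pmf_of_set {..<N}) (pmf_of_set {..<Nsub}) (sigma' Nsub T \<alpha>)
              \<le> payoff N T p q (sigma' Nsub T \<alpha>))
       \<and> (\<forall>sig\<in>set_pmf (sigma' Nsub T \<alpha>). feasible Nsub T \<alpha> sig)
       \<and> (\<forall>sig. feasible Nsub T \<alpha> sig \<longrightarrow>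
            payoff_det N T (pmf_of_set {..<N}) (pmf_of_set {..<Nsub}) sig
              \<le> payoff N T (pmf_of_set {..<N}) (pmf_of_set {..<Nsub}) (sigma' Nsub T \<alpha>))"
proof -
  obtain k :: nat where k: "(1 - \<alpha>) * real T = 2 * real k" using assms(6) by blast
  have Nsub: "1 \<le> Nsub" using assms(2) by simp
  show ?thesis
    using uniform_minimizes_payoff_sigma'[OF assms(1) Nsub assms(4)]
      sigma'_feasible[OF Nsub assms(3,4) k]
      payoff_det_le_payoff_sigma'[OF assms(1) Nsub assms(3,4) k]
    by blast
qed

end
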